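(* Every quantifier-free formula in the first-order language of graphs has finite VC-dimension on the class $\mathcal J$ of all Johnson graphs; that is, for every quantifier-free formula $\varphi(\bar x;\bar y)$ with its free variables partitioned into tuples $\bar x,\bar y$, there is $N\in\mathbb N$ such that for every $G\in\mathcal J$ the set system $\big(V(G)^{|\bar x|},\{\{\bar a\mid G\models\varphi(\bar a,\bar b)\}\mid \bar b\in V(G)^{|\bar y|}\}\big)$ has VC-dimension at most $N$.
   Context: The first-order language of graphs has atomic formulas $Exy$ (adjacency) and $x=y$, closed under $\neg,\wedge,\vee$ and quantification over vertices; a formula is quantifier-free if it contains no quantifiers. For $m\ge k$ and a set $X$ with $|X|=m$, the Johnson graph $J(m,k)$ has as vertices the $k$-element subsets of $X$, two vertices adjacent iff their intersection has size $k-1$; $\mathcal J=\{J(m,k)\mid k,m\in\mathbb N, k\le m\}$. A set $A\subseteq U$ is shattered by a family $\mathcal S$ of subsets of $U$ if $\{A\cap S\mid S\in\mathcal S\}$ is the power set of $A$; the VC-dimension of $(U,\mathcal S)$ is the supremum of sizes of shattered subsets. *)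

theory Defs
  imports Main "HOL-Library.Extended_Nat"
begin

datatype 'v qf_formula =
    Adj 'v 'v
  | Equal 'v 'v
  | Neg "'v qf_formula"
  | Conj "'v qf_formula" "'v qf_formula"
  | Disj "'v qf_formula" "'v qf_formula"

fun qf_vars :: "'v qf_formula \<Rightarrow> 'v set" where
  "qf_vars (Adj x y) = {x, y}"
| "qf_vars (Equal x y) = {x, y}"
| "qf_vars (Neg f) = qf_vars f"
| "qf_vars (Conj f g) = qf_vars f \<union> qf_vars g"
| "qf_vars (Disj f g) = qf_vars f \<union> qf_vars g"

fun qf_sat :: "('a \<Rightarrow> 'a \<Rightarrow> bool) \<Rightarrow> ('v \<Rightarrow> 'a) \<Rightarrow> 'v qf_formula \<Rightarrow> bool" where
  "qf_sat E s (Adj x y) = E (s x) (s y)"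
| "qf_sat E s (Equal x y) = (s x = s y)"
| "qf_sat E s (Neg f) = (\<not> qf_sat E s f)"
| "qf_sat E s (Conj f g) = (qf_sat E s f \<and> qf_sat E s g)"
| "qf_sat E s (Disj f g) = (qf_sat E s f \<or> qf_sat E s g)"

text \<open>Assignment for the partitioned variables: Inl i is x_i, Inr j is y_j.\<close>
definition tuple_assign :: "'a list \<Rightarrow> 'a list \<Rightarrow> nat + nat \<Rightarrow> 'a" where
  "tuple_assign a b v = (case v of Inl i \<Rightarrow> a ! i | Inr j \<Rightarrow> b ! j)"

definition tuples :: "'a set \<Rightarrow> nat \<Rightarrow> 'a list set" where
  "tuples V n = {xs. length xs = n \<and> set xs \<subseteq> V}"

definition johnson_V :: "nat \<Rightarrow> nat \<Rightarrow> nat set set" where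
  "johnson_V m k = {S. S \<subseteq> {0..<m} \<and> card S = k}"

definition johnson_E :: "nat \<Rightarrow> nat set \<Rightarrow> nat set \<Rightarrow> bool" where
  "johnson_E k S T \<longleftrightarrow> card (S \<inter> T) + 1 = k"

definition shatters :: "'a set set \<Rightarrow> 'a set \<Rightarrow> bool" where
  "shatters \<S> A \<longleftrightarrow> {A \<inter> S | S. S \<in> \<S>} = Pow A"

definition vc_dim :: "'a set \<Rightarrow> 'a set set \<Rightarrow> enat" where
  "vc_dim U \<S> = Sup {enat (card A) | A. A \<subseteq> U \<and> finite A \<and> shatters \<S> A}"

end

theory Submission
  imports Defs "HOL-Real_Asymp.Real_Asymp"
begin

text \<open>
  A set of \<open>n\<close> shattered \<open>kx\<close>-tuples mentions a set \<open>W\<close> of at most \<open>kx * n\<close> vertices, and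
  whether \<open>\<phi>(a, b)\<close> holds for the tuples \<open>a\<close> over \<open>W\<close> depends only on the quantifier-free
  type of \<open>b\<close> over \<open>W\<close>: the neighbourhood in \<open>W\<close> of each entry of \<open>b\<close>, whether it lies in \<open>W\<close>,
  and the atomic relations among the entries of \<open>b\<close>. In a Johnson graph a vertex adjacent to
  \<open>w\<^sub>0 \<in> W\<close> has the form \<open>w\<^sub>0 - {c} \<union> {d}\<close>, and its neighbourhood in \<open>W\<close> depends only
  on \<open>w\<^sub>0\<close> and on those of \<open>c, d\<close> lying in the set \<open>Z\<close> of the \<open>O(|W|\<^sup>2)\<close> points by which
  members of \<open>W\<close> at distance at most 2 differ. Hence there are only polynomially many types
  over \<open>W\<close>, while shattering needs \<open>2\<^sup>n\<close> of them, which bounds \<open>n\<close> uniformly.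
\<close>

lemma card_image_le_if_coded:
  assumes "finite K"
    and coded: "\<And>v. v \<in> V \<Longrightarrow> \<exists>\<kappa>\<in>K. P v \<kappa>"
    and determined: "\<And>v v' \<kappa>. v \<in> V \<Longrightarrow> v' \<in> V \<Longrightarrow> P v \<kappa> \<Longrightarrow> P v' \<kappa> \<Longrightarrow> f v = f v'"
  shows "card (f ` V) \<le> card K"
proof (rule surj_card_le[OF \<open>finite K\<close>])
  show "f ` V \<subseteq> (\<lambda>\<kappa>. f (SOME v. v \<in> V \<and> P v \<kappa>)) ` K"
  proof
    fix y assume "y \<in> f ` V"
    then obtain v \<kappa> where v: "v \<in> V" "\<kappa> \<in> K" "P v \<kappa>" "y = f v"
      using coded by blast
    then have "(SOME v. v \<in> V \<and> P v \<kappa>) \<in> V \<and> P (SOME v. v \<in> V \<and> P v \<kappa>) \<kappa>"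
      by (metis (mono_tags, lifting) someI)
    then have "f (SOME v. v \<in> V \<and> P v \<kappa>) = y"
      using determined v by blast
    then show "y \<in> (\<lambda>\<kappa>. f (SOME v. v \<in> V \<and> P v \<kappa>)) ` K"
      using v(2) by blast
  qed
qed

lemma card_Diff_eq_card_Diff:
  assumes "finite A" "finite B" "card A = card B"
  shows "card (A - B) = card (B - A)"
  using assms card_Diff_subset_Int[of A B] card_Diff_subset_Int[of B A]
  by (simp add: Int_commute)

lemma exp_le_poly_bounded: "\<exists>N::nat. \<forall>n::nat. 2 ^ n \<le> C * (n + 1) ^ d \<longrightarrow> n \<le> N"
proof -
  have "(\<lambda>n::nat. real C * (real n + 1) ^ d / 2 ^ n) \<longlonglongrightarrow> 0"
    by real_asymp
  then have "eventually (\<lambda>n. real C * (real n + 1) ^ d / 2 ^ n < 1) sequentially"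
    by (rule order_tendstoD) simp
  then obtain N where N: "\<And>n. n \<ge> N \<Longrightarrow> real C * (real n + 1) ^ d / 2 ^ n < 1"
    by (auto simp: eventually_sequentially)
  have "n \<le> N" if "2 ^ n \<le> C * (n + 1) ^ d" for n
  proof (rule ccontr)
    assume "\<not> n \<le> N"
    then have "real C * (real n + 1) ^ d < 2 ^ n"
      using N[of n] by (simp add: divide_less_eq)
    moreover have "real (2 ^ n) \<le> real (C * (n + 1) ^ d)"
      using that by (simp only: of_nat_le_iff)
    ultimately show False
      by (simp add: add.commute)
  qed
  then show ?thesis by blast
qed

lemma vc_dim_le_enatI:
  assumes "\<And>A. A \<subseteq> U \<Longrightarrow> finite A \<Longrightarrow> shatters \<S> A \<Longrightarrow> card A \<le> N"
  shows "vc_dim U \<S> \<le> enat N"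
  unfolding vc_dim_def using assms by (auto intro!: Sup_least)

lemma shatters_family_iff:
  assumes "A \<subseteq> T"
  shows "shatters {{a \<in> T. P a b} | b. b \<in> B} A \<longleftrightarrow> (\<lambda>b. {a \<in> A. P a b}) ` B = Pow A"
proof -
  have "A \<inter> {a \<in> T. P a b} = {a \<in> A. P a b}" for b
    using assms by blast
  then have "{A \<inter> S | S. S \<in> {{a \<in> T. P a b} | b. b \<in> B}} = (\<lambda>b. {a \<in> A. P a b}) ` B"
    by auto
  then show ?thesis unfolding shatters_def by simp
qed

lemma qf_sat_tuple_assign_cong:
  assumes "qf_vars \<phi> \<subseteq> Inl ` {..<kx} \<union> Inr ` {..<ky}"
    and "\<And>i j. i < kx \<Longrightarrow> j < ky \<Longrightarrow> E (a ! i) (b ! j) = E (a ! i) (b' ! j)"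
    and "\<And>i j. i < kx \<Longrightarrow> j < ky \<Longrightarrow> E (b ! j) (a ! i) = E (b' ! j) (a ! i)"
    and "\<And>i j. i < kx \<Longrightarrow> j < ky \<Longrightarrow> (a ! i = b ! j) = (a ! i = b' ! j)"
    and "\<And>i j. i < ky \<Longrightarrow> j < ky \<Longrightarrow> E (b ! i) (b ! j) = E (b' ! i) (b' ! j)"
    and "\<And>i j. i < ky \<Longrightarrow> j < ky \<Longrightarrow> (b ! i = b ! j) = (b' ! i = b' ! j)"
  shows "qf_sat E (tuple_assign a b) \<phi> = qf_sat E (tuple_assign a b') \<phi>"
  using assms(1)
proof (induction \<phi>)
  case (Adj x y)
  then show ?case using assms(2,3,5) by (auto simp: tuple_assign_def)
next
  case (Equal x y)
  then show ?case using assms(4,6) by (auto simp: tuple_assign_def) metis+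
qed auto

definition nbhd_profile :: "('a \<Rightarrow> 'a \<Rightarrow> bool) \<Rightarrow> 'a set \<Rightarrow> 'a \<Rightarrow> 'a set \<times> 'a set" where
  "nbhd_profile E W v = ({w \<in> W. E w v}, {w \<in> W. w = v})"

lemma card_qf_traces_le:
  fixes E :: "'a \<Rightarrow> 'a \<Rightarrow> bool"
  assumes "symp E" and \<phi>: "qf_vars \<phi> \<subseteq> Inl ` {..<kx} \<union> Inr ` {..<ky}" and "finite W"
    and A: "A \<subseteq> tuples W kx" and B: "B \<subseteq> tuples V ky"
  shows "card ((\<lambda>b. {a \<in> A. qf_sat E (tuple_assign a b) \<phi>}) ` B)
           \<le> card (nbhd_profile E W ` V) ^ ky * 4 ^ (ky * ky)"
proof -
  define pattern where
    "pattern R b = {(i, j) \<in> {..<ky} \<times> {..<ky}. R (b ! i) (b ! j)}" for R and b :: "'a list"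
  define K where "K = {xs. set xs \<subseteq> nbhd_profile E W ` V \<and> length xs = ky}
                        \<times> Pow ({..<ky} \<times> {..<ky}) \<times> Pow ({..<ky} \<times> {..<ky})"
  have fin_profiles: "finite (nbhd_profile E W ` V)"
    by (rule finite_subset[of _ "Pow W \<times> Pow W"]) (auto simp: nbhd_profile_def \<open>finite W\<close>)
  have "card ((\<lambda>b. {a \<in> A. qf_sat E (tuple_assign a b) \<phi>}) ` B) \<le> card K"
  proof (rule card_image_le_if_coded[where
        P = "\<lambda>b \<kappa>. \<kappa> = (map (nbhd_profile E W) b, pattern E b, pattern (=) b)"])
    show "finite K"
      using fin_profiles by (simp add: K_def finite_lists_length_eq)
    show "\<exists>\<kappa>\<in>K. \<kappa> = (map (nbhd_profile E W) b, pattern E b, pattern (=) b)" if "b \<in> B" for b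
      using that B by (auto simp: K_def pattern_def tuples_def)
  next
    fix b b' \<kappa>
    assume "b \<in> B" "b' \<in> B"
      and "\<kappa> = (map (nbhd_profile E W) b, pattern E b, pattern (=) b)"
      and "\<kappa> = (map (nbhd_profile E W) b', pattern E b', pattern (=) b')"
    then have lengths: "length b = ky" "length b' = ky"
      and profiles: "map (nbhd_profile E W) b = map (nbhd_profile E W) b'"
      and patterns: "pattern E b = pattern E b'" "pattern (=) b = pattern (=) b'"
      using B by (auto simp: tuples_def)
    have profile: "nbhd_profile E W (b ! j) = nbhd_profile E W (b' ! j)" if "j < ky" for j
      using profiles lengths that by (metis nth_map)
    have pattern_iff: "(i, j) \<in> pattern R b \<longleftrightarrow> (i, j) \<in> pattern R b'"
      if "R = E \<or> R = (=)" for R i j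
      using patterns that by auto
    have "qf_sat E (tuple_assign a b) \<phi> = qf_sat E (tuple_assign a b') \<phi>" if "a \<in> A" for a
    proof (rule qf_sat_tuple_assign_cong[OF \<phi>])
      fix i j assume ij: "i < kx" "j < ky"
      have "length a = kx" "set a \<subseteq> W"
        using that A by (auto simp: tuples_def)
      then have "a ! i \<in> W"
        using ij(1) nth_mem by blast
      then show "E (a ! i) (b ! j) = E (a ! i) (b' ! j)" "(a ! i = b ! j) = (a ! i = b' ! j)"
        using profile[OF ij(2)] by (auto simp: nbhd_profile_def set_eq_iff)
      then show "E (b ! j) (a ! i) = E (b' ! j) (a ! i)"
        using \<open>symp E\<close> by (metis sympD)
    next
      fix i j assume "i < ky" "j < ky"
      then show "E (b ! i) (b ! j) = E (b' ! i) (b' ! j)" "(b ! i = b ! j) = (b' ! i = b' ! j)"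
        using pattern_iff[of E i j] pattern_iff[of "(=)" i j] by (auto simp: pattern_def)
    qed
    then show "{a \<in> A. qf_sat E (tuple_assign a b) \<phi>} = {a \<in> A. qf_sat E (tuple_assign a b') \<phi>}"
      by blast
  qed
  also have "card K = card (nbhd_profile E W ` V) ^ ky * 4 ^ (ky * ky)"
    using fin_profiles
    by (simp add: K_def card_cartesian_product card_lists_length_eq card_Pow
        flip: power_mult_distrib)
  finally show ?thesis .
qed

lemma johnson_E_symp: "symp (johnson_E k)"
  by (auto intro: sympI simp: johnson_E_def Int_commute)

lemma johnson_neighbourE:
  assumes "finite w\<^sub>0" "finite v" "card w\<^sub>0 = k" "card v = k" "johnson_E k w\<^sub>0 v"
  obtains c d where "c \<in> w\<^sub>0" "d \<notin> w\<^sub>0" "v = insert d (w\<^sub>0 - {c})"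
proof -
  have "card (w\<^sub>0 - v) = 1" "card (v - w\<^sub>0) = 1"
    using assms card_Diff_subset_Int[of w\<^sub>0 v] card_Diff_subset_Int[of v w\<^sub>0]
    by (auto simp: johnson_E_def Int_commute)
  then obtain c d where "w\<^sub>0 - v = {c}" "v - w\<^sub>0 = {d}"
    by (meson card_1_singletonE)
  then show ?thesis
    using that by blast
qed

lemma card_Int_insert_Diff:
  assumes "finite w\<^sub>0" "c \<in> w\<^sub>0" "d \<notin> w\<^sub>0"
  shows "card (w \<inter> insert d (w\<^sub>0 - {c})) + of_bool (c \<in> w) = card (w \<inter> w\<^sub>0) + of_bool (d \<in> w)"
proof -
  have "w \<inter> (w\<^sub>0 - {c}) = (w \<inter> w\<^sub>0) - {c}"
    by blast
  moreover have "c \<in> w \<Longrightarrow> card (w \<inter> w\<^sub>0) > 0"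
    using assms by (auto simp: card_gt_0_iff)
  ultimately have "card (w \<inter> (w\<^sub>0 - {c})) + of_bool (c \<in> w) = card (w \<inter> w\<^sub>0)"
    using assms by (simp add: card_Diff_singleton_if)
  then show ?thesis
    using assms by (cases "d \<in> w") (auto simp: Int_insert_right)
qed

text \<open>Only sets at distance at most 2 from \<open>w\<^sub>0\<close> can be adjacent to a neighbour of \<open>w\<^sub>0\<close>.\<close>

lemma johnson_E_swap_cong:
  assumes "finite w\<^sub>0" "finite w" "card w\<^sub>0 = k" "card w = k"
    and "c \<in> w\<^sub>0" "c' \<in> w\<^sub>0" "d \<notin> w\<^sub>0" "d' \<notin> w\<^sub>0"
    and near: "card (w - w\<^sub>0) \<le> 2 \<Longrightarrow> sym_diff w w\<^sub>0 \<subseteq> Z"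
    and "c = c' \<or> c \<notin> Z \<and> c' \<notin> Z" "d = d' \<or> d \<notin> Z \<and> d' \<notin> Z"
  shows "johnson_E k w (insert d (w\<^sub>0 - {c})) \<longleftrightarrow> johnson_E k w (insert d' (w\<^sub>0 - {c'}))"
proof (cases "card (w - w\<^sub>0) \<le> 2")
  case True
  then have "(c \<in> w \<longleftrightarrow> c' \<in> w) \<and> (d \<in> w \<longleftrightarrow> d' \<in> w)"
    using near assms(5-8,10,11) by blast
  then show ?thesis
    using card_Int_insert_Diff[of w\<^sub>0 c d w] card_Int_insert_Diff[of w\<^sub>0 c' d' w] assms(1,5-8)
    by (auto simp: johnson_E_def)
next
  case False
  then have "card (w \<inter> w\<^sub>0) + 3 \<le> k"
    using card_Int_Diff[of w w\<^sub>0] assms(2,4) by linarith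
  then show ?thesis
    using card_Int_insert_Diff[of w\<^sub>0 c d w] card_Int_insert_Diff[of w\<^sub>0 c' d' w] assms(1,5-8)
    by (auto simp: johnson_E_def of_bool_def split: if_splits)
qed

lemma card_near_sym_diffs_le:
  assumes "finite W" and W: "\<And>w. w \<in> W \<Longrightarrow> finite w \<and> card w = k"
  defines "near \<equiv> {(w\<^sub>0, w) \<in> W \<times> W. card (w - w\<^sub>0) \<le> 2}"
  shows "finite (\<Union>(w\<^sub>0, w) \<in> near. sym_diff w w\<^sub>0)"
    and "card (\<Union>(w\<^sub>0, w) \<in> near. sym_diff w w\<^sub>0) \<le> 4 * card W ^ 2"
proof -
  have "near \<subseteq> W \<times> W"
    by (auto simp: near_def)
  then have "finite near"
    using finite_subset \<open>finite W\<close> by blast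
  have "card near \<le> card W ^ 2"
    using card_mono[OF _ \<open>near \<subseteq> W \<times> W\<close>] \<open>finite W\<close>
    by (simp add: card_cartesian_product power2_eq_square)
  have "finite (sym_diff w w\<^sub>0)" if "(w\<^sub>0, w) \<in> near" for w\<^sub>0 w
    using that W by (simp add: near_def)
  then show "finite (\<Union>(w\<^sub>0, w) \<in> near. sym_diff w w\<^sub>0)"
    using \<open>finite near\<close> by auto
  have "card (sym_diff w w\<^sub>0) \<le> 4" if "(w\<^sub>0, w) \<in> near" for w\<^sub>0 w
  proof -
    have "card (w\<^sub>0 - w) = card (w - w\<^sub>0)"
      using that W by (intro card_Diff_eq_card_Diff) (auto simp: near_def)
    then show ?thesis
      using that card_Un_le[of "w - w\<^sub>0" "w\<^sub>0 - w"] by (simp add: near_def)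
  qed
  then have "(\<Sum>p \<in> near. card ((\<lambda>(w\<^sub>0, w). sym_diff w w\<^sub>0) p)) \<le> (\<Sum>p \<in> near. 4)"
    by (intro sum_mono) auto
  then have "card (\<Union>(w\<^sub>0, w) \<in> near. sym_diff w w\<^sub>0) \<le> card near * 4"
    using card_UN_le[OF \<open>finite near\<close>, of "\<lambda>(w\<^sub>0, w). sym_diff w w\<^sub>0"] by simp
  then show "card (\<Union>(w\<^sub>0, w) \<in> near. sym_diff w w\<^sub>0) \<le> 4 * card W ^ 2"
    using \<open>card near \<le> card W ^ 2\<close> by simp
qed

lemma card_johnson_nonempty_nbhd_traces_le:
  assumes "finite W"
    and W: "\<And>w. w \<in> W \<Longrightarrow> finite w \<and> card w = k"
    and V: "\<And>v. v \<in> V \<Longrightarrow> finite v \<and> card v = k"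
  shows "card ((\<lambda>v. {w \<in> W. johnson_E k w v}) ` {v \<in> V. \<exists>w \<in> W. johnson_E k w v})
           \<le> card W * (4 * card W ^ 2 + 1) ^ 2"
proof -
  define Z where "Z = (\<Union>(w\<^sub>0, w) \<in> {(w\<^sub>0, w) \<in> W \<times> W. card (w - w\<^sub>0) \<le> 2}. sym_diff w w\<^sub>0)"
  have "finite Z" "card Z \<le> 4 * card W ^ 2"
    unfolding Z_def using card_near_sym_diffs_le[OF \<open>finite W\<close> W] by blast+
  define opt where "opt x = (if x \<in> Z then Some x else None)" for x
  define K where "K = W \<times> insert None (Some ` Z) \<times> insert None (Some ` Z)"
  define swap_code where "swap_code v \<kappa> \<longleftrightarrow> (\<exists>w\<^sub>0 c d. \<kappa> = (w\<^sub>0, opt c, opt d) \<and> w\<^sub>0 \<in> W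
    \<and> c \<in> w\<^sub>0 \<and> d \<notin> w\<^sub>0 \<and> v = insert d (w\<^sub>0 - {c}))" for v \<kappa>
  have "card ((\<lambda>v. {w \<in> W. johnson_E k w v}) ` {v \<in> V. \<exists>w \<in> W. johnson_E k w v}) \<le> card K"
  proof (rule card_image_le_if_coded[where P = swap_code])
    show "finite K"
      using \<open>finite W\<close> \<open>finite Z\<close> by (simp add: K_def)
  next
    fix v assume "v \<in> {v \<in> V. \<exists>w \<in> W. johnson_E k w v}"
    then obtain w\<^sub>0 where "v \<in> V" "w\<^sub>0 \<in> W" "johnson_E k w\<^sub>0 v"
      by blast
    moreover have "finite w\<^sub>0" "finite v" "card w\<^sub>0 = k" "card v = k"
      using W[OF \<open>w\<^sub>0 \<in> W\<close>] V[OF \<open>v \<in> V\<close>] by auto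
    then obtain c d where "c \<in> w\<^sub>0" "d \<notin> w\<^sub>0" "v = insert d (w\<^sub>0 - {c})"
      using \<open>johnson_E k w\<^sub>0 v\<close> by (rule johnson_neighbourE)
    ultimately have "(w\<^sub>0, opt c, opt d) \<in> K" "swap_code v (w\<^sub>0, opt c, opt d)"
      unfolding K_def opt_def swap_code_def by auto
    then show "\<exists>\<kappa>\<in>K. swap_code v \<kappa>"
      by blast
  next
    fix v v' \<kappa>
    assume "swap_code v \<kappa>" "swap_code v' \<kappa>"
    then obtain w\<^sub>0 c d c' d' where "w\<^sub>0 \<in> W" "c \<in> w\<^sub>0" "d \<notin> w\<^sub>0" "c' \<in> w\<^sub>0" "d' \<notin> w\<^sub>0"
      and "opt c = opt c'" "opt d = opt d'"
      and "v = insert d (w\<^sub>0 - {c})" "v' = insert d' (w\<^sub>0 - {c'})"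
      unfolding swap_code_def by auto
    moreover have "johnson_E k w v \<longleftrightarrow> johnson_E k w v'" if "w \<in> W" for w
      unfolding \<open>v = _\<close> \<open>v' = _\<close>
    proof (rule johnson_E_swap_cong[where Z = Z])
      show "finite w\<^sub>0" "finite w" "card w\<^sub>0 = k" "card w = k"
        using W \<open>w \<in> W\<close> \<open>w\<^sub>0 \<in> W\<close> by auto
      show "card (w - w\<^sub>0) \<le> 2 \<Longrightarrow> sym_diff w w\<^sub>0 \<subseteq> Z"
        unfolding Z_def using that \<open>w\<^sub>0 \<in> W\<close> by blast
      show "c = c' \<or> c \<notin> Z \<and> c' \<notin> Z" "d = d' \<or> d \<notin> Z \<and> d' \<notin> Z"
        using \<open>opt c = opt c'\<close> \<open>opt d = opt d'\<close> by (auto simp: opt_def split: if_splits)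
    qed fact+
    ultimately show "{w \<in> W. johnson_E k w v} = {w \<in> W. johnson_E k w v'}"
      by blast
  qed
  also have "card K \<le> card W * ((4 * card W ^ 2 + 1) * (4 * card W ^ 2 + 1))"
    unfolding K_def card_cartesian_product
    using \<open>finite Z\<close> \<open>card Z \<le> 4 * card W ^ 2\<close>
    by (intro mult_le_mono le_refl) (simp_all add: card_image)
  finally show ?thesis
    by (simp add: power2_eq_square)
qed

lemma card_johnson_nbhd_traces_le:
  assumes "finite W"
    and W: "\<And>w. w \<in> W \<Longrightarrow> finite w \<and> card w = k"
    and V: "\<And>v. v \<in> V \<Longrightarrow> finite v \<and> card v = k"
  shows "card ((\<lambda>v. {w \<in> W. johnson_E k w v}) ` V) \<le> card W * (4 * card W ^ 2 + 1) ^ 2 + 1"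
proof -
  let ?nonempty = "(\<lambda>v. {w \<in> W. johnson_E k w v}) ` {v \<in> V. \<exists>w \<in> W. johnson_E k w v}"
  have "finite ?nonempty"
    by (rule finite_subset[of _ "Pow W"]) (auto simp: \<open>finite W\<close>)
  have "card ((\<lambda>v. {w \<in> W. johnson_E k w v}) ` V) \<le> card (insert {} ?nonempty)"
    using \<open>finite ?nonempty\<close> by (intro card_mono) auto
  also have "\<dots> \<le> card ?nonempty + 1"
    using \<open>finite ?nonempty\<close> by (simp add: card_insert_if)
  also have "\<dots> \<le> card W * (4 * card W ^ 2 + 1) ^ 2 + 1"
    using card_johnson_nonempty_nbhd_traces_le[OF assms] by simp
  finally show ?thesis .
qed

lemma johnson_trace_count_le_poly: "((R::nat) * (4 * R ^ 2 + 1) ^ 2 + 1) * (R + 1) \<le> 17 * (R + 1) ^ 6"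
proof -
  define r where "r = R + 1"
  have "4 * R ^ 2 + 1 \<le> 4 * r ^ 2"
    by (simp add: r_def power2_eq_square algebra_simps)
  then have "(4 * R ^ 2 + 1) ^ 2 \<le> (4 * r ^ 2) ^ 2"
    by (rule power_mono) simp
  then have "R * (4 * R ^ 2 + 1) ^ 2 \<le> r * (4 * r ^ 2) ^ 2"
    by (rule mult_le_mono[OF le_add1[of R 1, folded r_def]])
  also have "\<dots> = 16 * r ^ 5"
    by (simp add: power_mult_distrib flip: power_mult power_Suc)
  finally have "R * (4 * R ^ 2 + 1) ^ 2 + 1 \<le> 17 * r ^ 5"
    using one_le_power[of r 5] r_def by linarith
  then have "(R * (4 * R ^ 2 + 1) ^ 2 + 1) * r \<le> 17 * r ^ 5 * r"
    by (rule mult_le_mono1)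
  also have "\<dots> = 17 * r ^ 6"
    by (simp add: mult.assoc flip: power_Suc2)
  finally show ?thesis
    by (simp only: r_def)
qed

lemma card_johnson_profiles_le:
  assumes "finite W"
    and W: "\<And>w. w \<in> W \<Longrightarrow> finite w \<and> card w = k"
    and V: "\<And>v. v \<in> V \<Longrightarrow> finite v \<and> card v = k"
  shows "card (nbhd_profile (johnson_E k) W ` V) \<le> 17 * (card W + 1) ^ 6"
proof -
  let ?traces = "(\<lambda>v. {w \<in> W. johnson_E k w v}) ` V"
  let ?singletons = "insert {} ((\<lambda>w. {w}) ` W)"
  have "finite ?traces"
    by (rule finite_subset[of _ "Pow W"]) (auto simp: \<open>finite W\<close>)
  have "card ?singletons \<le> card W + 1"
    using card_image_le[OF \<open>finite W\<close>, of "\<lambda>w. {w}"] by (intro card_insert_le_m1) auto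
  have "nbhd_profile (johnson_E k) W ` V \<subseteq> ?traces \<times> ?singletons"
    by (auto simp: nbhd_profile_def)
  then have "card (nbhd_profile (johnson_E k) W ` V) \<le> card (?traces \<times> ?singletons)"
    using \<open>finite ?traces\<close> \<open>finite W\<close> by (intro card_mono) auto
  also have "\<dots> \<le> (card W * (4 * card W ^ 2 + 1) ^ 2 + 1) * (card W + 1)"
    unfolding card_cartesian_product
    using card_johnson_nbhd_traces_le[OF assms] \<open>card ?singletons \<le> card W + 1\<close>
    by (rule mult_le_mono)
  also have "\<dots> \<le> 17 * (card W + 1) ^ 6"
    by (rule johnson_trace_count_le_poly)
  finally show ?thesis .
qed

lemma card_johnson_qf_traces_le:
  assumes \<phi>: "qf_vars \<phi> \<subseteq> Inl ` {..<kx} \<union> Inr ` {..<ky}"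
    and A: "A \<subseteq> tuples (johnson_V m k) kx" "finite A"
  shows "card ((\<lambda>b. {a \<in> A. qf_sat (johnson_E k) (tuple_assign a b) \<phi>}) ` tuples (johnson_V m k) ky)
           \<le> (17 * (kx + 1) ^ 6) ^ ky * 4 ^ (ky * ky) * (card A + 1) ^ (6 * ky)"
proof -
  define W where "W = (\<Union>a\<in>A. set a)"
  have vertices: "\<And>v. v \<in> johnson_V m k \<Longrightarrow> finite v \<and> card v = k"
    by (auto simp: johnson_V_def intro: finite_subset)
  have "W \<subseteq> johnson_V m k" "A \<subseteq> tuples W kx"
    using A(1) by (auto simp: W_def tuples_def)
  have "finite W"
    using A(2) by (simp add: W_def)
  have "card W \<le> (\<Sum>a\<in>A. card (set a))"
    unfolding W_def using A(2) by (rule card_UN_le)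
  also have "\<dots> \<le> (\<Sum>a\<in>A. kx)"
    using A(1) card_length by (intro sum_mono) (fastforce simp: tuples_def)
  finally have "card W + 1 \<le> (kx + 1) * (card A + 1)"
    by (simp add: algebra_simps)
  have "card (nbhd_profile (johnson_E k) W ` johnson_V m k) \<le> 17 * (card W + 1) ^ 6"
    using vertices \<open>W \<subseteq> johnson_V m k\<close> by (intro card_johnson_profiles_le[OF \<open>finite W\<close>]) auto
  also have "\<dots> \<le> 17 * ((kx + 1) * (card A + 1)) ^ 6"
    using \<open>card W + 1 \<le> _\<close> by (intro mult_le_mono2 power_mono) auto
  finally have "card (nbhd_profile (johnson_E k) W ` johnson_V m k) ^ ky
      \<le> (17 * ((kx + 1) * (card A + 1)) ^ 6) ^ ky"
    by (rule power_mono) simp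
  also have "\<dots> = (17 * (kx + 1) ^ 6) ^ ky * (card A + 1) ^ (6 * ky)"
    by (simp only: power_mult power_mult_distrib mult.assoc)
  finally have "card (nbhd_profile (johnson_E k) W ` johnson_V m k) ^ ky * 4 ^ (ky * ky)
      \<le> (17 * (kx + 1) ^ 6) ^ ky * (card A + 1) ^ (6 * ky) * 4 ^ (ky * ky)"
    by (rule mult_le_mono1)
  also have "\<dots> = (17 * (kx + 1) ^ 6) ^ ky * 4 ^ (ky * ky) * (card A + 1) ^ (6 * ky)"
    by (simp only: ac_simps)
  finally show ?thesis
    using card_qf_traces_le[OF johnson_E_symp \<phi> \<open>finite W\<close> \<open>A \<subseteq> tuples W kx\<close> order_refl]
    by (rule le_trans[rotated])
qed

theorem mainTheorem9:
  fixes \<phi> :: "(nat + nat) qf_formula" and kx ky :: nat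
  assumes "qf_vars \<phi> \<subseteq> Inl ` {..<kx} \<union> Inr ` {..<ky}"
  shows "\<exists>N::nat. \<forall>m k. k \<le> m \<longrightarrow>
           vc_dim (tuples (johnson_V m k) kx)
             {{a \<in> tuples (johnson_V m k) kx. qf_sat (johnson_E k) (tuple_assign a b) \<phi>}
               | b. b \<in> tuples (johnson_V m k) ky}
           \<le> enat N"
proof -
  define C where "C = (17 * (kx + 1) ^ 6) ^ ky * 4 ^ (ky * ky)"
  obtain N where N: "\<And>n. 2 ^ n \<le> C * (n + 1) ^ (6 * ky) \<Longrightarrow> n \<le> N"
    using exp_le_poly_bounded[of C "6 * ky"] by blast
  have "vc_dim (tuples (johnson_V m k) kx)
          {{a \<in> tuples (johnson_V m k) kx. qf_sat (johnson_E k) (tuple_assign a b) \<phi>}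
            | b. b \<in> tuples (johnson_V m k) ky} \<le> enat N" for m k
  proof (rule vc_dim_le_enatI)
    fix A
    assume A: "A \<subseteq> tuples (johnson_V m k) kx" "finite A"
      and "shatters {{a \<in> tuples (johnson_V m k) kx. qf_sat (johnson_E k) (tuple_assign a b) \<phi>}
                      | b. b \<in> tuples (johnson_V m k) ky} A"
    then have "Pow A = (\<lambda>b. {a \<in> A. qf_sat (johnson_E k) (tuple_assign a b) \<phi>}) ` tuples (johnson_V m k) ky"
      by (simp add: shatters_family_iff[where P = "\<lambda>a b. qf_sat (johnson_E k) (tuple_assign a b) \<phi>"])
    have "2 ^ card A = card (Pow A)"
      using A(2) by (simp add: card_Pow)
    also have "\<dots> \<le> C * (card A + 1) ^ (6 * ky)"
      using card_johnson_qf_traces_le[OF assms A] \<open>Pow A = _\<close> by (simp add: C_def)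
    finally show "card A \<le> N"
      by (rule N)
  qed
  then show ?thesis
    by blast
qed

end
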